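(* Let $\mathcal{H}$ be a $K$-vector space and $\Delta:\mathcal{H}\to\mathcal{H}\otimes\mathcal{H}$ a linear map such that $\Delta^{(2)}=(\mathrm{id}\otimes\tau)\Delta^{(2)}$. Then for every $n\geq 1$ and every $\sigma\in\Sigma_n$, one has $(\mathrm{id}_{\mathcal{H}}\otimes\sigma)\circ\Delta^{(n)}=\Delta^{(n)}$, where $\sigma$ acts on $\mathcal{H}^{\otimes n}$ by permuting the tensor factors; i.e. the last $n$ tensor components of $\Delta^{(n)}(x)\in\mathcal{H}^{\otimes(n+1)}$ are invariant under $\Sigma_n$.
   Context: $K$ is a field of characteristic zero. $\tau$ is the flip $a\otimes b\mapsto b\otimes a$ on $\mathcal{H}\otimes\mathcal{H}$, so $\mathrm{id}\otimes\tau$ flips the last two factors of $\mathcal{H}^{\otimes 3}$. The iterates are defined by $\Delta^{(1)}=\Delta$ and $\Delta^{(n)}=(\Delta\otimes\mathrm{id}^{\otimes(n-1)})\circ\Delta^{(n-1)}:\mathcal{H}\to\mathcal{H}^{\otimes(n+1)}$; in particular $\Delta^{(2)}=(\Delta\otimes\mathrm{id})\Delta$. *)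

theory Defs
  imports Main "HOL-Combinatorics.Combinatorics" "HOL-Library.Function_Algebras"
begin

text \<open>
The free K-vector space on words of vectors is modelled by functions
  F :: 'h list => 'k  with finite support; the basis vector of a word is fbasis w.
A representative of an element of the n-th tensor power is such an F supported on
words of length n.  The n-th tensor power itself is the quotient of this free space
by the span of the multilinearity relations (tensor_rel); two representatives denote
the same tensor iff their difference lies in tensor_null.
\<close>

definition fscale :: "'k::field \<Rightarrow> ('h list \<Rightarrow> 'k) \<Rightarrow> ('h list \<Rightarrow> 'k)" where
  "fscale c F = (\<lambda>w. c * F w)"

definition fbasis :: "'h list \<Rightarrow> ('h list \<Rightarrow> 'k::field)" where
  "fbasis w = (\<lambda>v. if v = w then 1 else 0)"

definition tensor_rep :: "nat \<Rightarrow> ('h list \<Rightarrow> 'k::field) set" where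
  "tensor_rep n = {F. finite {w. F w \<noteq> 0} \<and> (\<forall>w. F w \<noteq> 0 \<longrightarrow> length w = n)}"

definition tensor_rel :: "('k::field \<Rightarrow> 'h::ab_group_add \<Rightarrow> 'h) \<Rightarrow> ('h list \<Rightarrow> 'k) set" where
  "tensor_rel scale =
     {fbasis (xs @ [x + y] @ ys) - fbasis (xs @ [x] @ ys) - fbasis (xs @ [y] @ ys) | xs x y ys. True}
   \<union> {fbasis (xs @ [scale c x] @ ys) - fscale c (fbasis (xs @ [x] @ ys)) | xs c x ys. True}"

definition tensor_null :: "('k::field \<Rightarrow> 'h::ab_group_add \<Rightarrow> 'h) \<Rightarrow> ('h list \<Rightarrow> 'k) set" where
  "tensor_null scale = module.span fscale (tensor_rel scale)"

definition tensor_eq :: "('k::field \<Rightarrow> 'h::ab_group_add \<Rightarrow> 'h) \<Rightarrow> ('h list \<Rightarrow> 'k) \<Rightarrow> ('h list \<Rightarrow> 'k) \<Rightarrow> bool" where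
  "tensor_eq scale F G \<longleftrightarrow> F - G \<in> tensor_null scale"

text \<open>The map  Delta \<otimes> id \<otimes> ... \<otimes> id  on representatives: a basis word x # xs is sent to
  Delta(x) \<otimes> xs, extended linearly.\<close>
definition delta_tensor_id :: "('h \<Rightarrow> ('h list \<Rightarrow> 'k::field)) \<Rightarrow> ('h list \<Rightarrow> 'k) \<Rightarrow> ('h list \<Rightarrow> 'k)" where
  "delta_tensor_id D F = (\<lambda>zs. \<Sum>ws\<in>{ws. F ws \<noteq> 0}.
      F ws * (if ws \<noteq> [] \<and> length zs \<ge> 2 \<and> drop 2 zs = tl ws then D (hd ws) (take 2 zs) else 0))"

definition iter_coprod :: "('h \<Rightarrow> ('h list \<Rightarrow> 'k::field)) \<Rightarrow> nat \<Rightarrow> 'h \<Rightarrow> ('h list \<Rightarrow> 'k)" where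
  "iter_coprod D n x = (delta_tensor_id D ^^ (n - 1)) (D x)"

text \<open>id_H \<otimes> sigma on representatives, sigma a permutation of the last tensor factors
  (indices 0..n-1 of the tail of the word).\<close>
definition id_tensor_perm :: "(nat \<Rightarrow> nat) \<Rightarrow> ('h list \<Rightarrow> 'k::field) \<Rightarrow> ('h list \<Rightarrow> 'k)" where
  "id_tensor_perm \<sigma> F = (\<lambda>zs. if zs = [] then F [] else F (hd zs # permute_list \<sigma> (tl zs)))"

end

theory Submission
  imports Defs
begin

text \<open>
  Write \<open>\<Delta>^(n+1) = (\<Delta> \<otimes> id) \<Delta>^(n)\<close> and induct on \<open>n\<close>. As \<open>\<Delta> \<otimes> id\<close> only acts on the
  first tensor factor, it intertwines \<open>id \<otimes> \<tau>\<close> with \<open>id \<otimes> (1 \<times> \<tau>)\<close> for \<open>\<tau> \<in> \<Sigma>\<^sub>n\<close>; so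
  invariance of \<open>\<Delta>^(n)\<close> under \<open>\<Sigma>\<^sub>n\<close> gives invariance of \<open>\<Delta>^(n+1)\<close> under the permutations
  of its last \<open>n + 1\<close> factors that fix the first of them. Since \<open>(\<Delta> \<otimes> id)\<^sup>2\<close> applies
  \<open>\<Delta>^(2)\<close> to the first factor, the hypothesis gives invariance under the transposition
  of the first two. These permutations generate \<open>\<Sigma>\<^sub>n\<^sub>+\<^sub>1\<close>. All maps involved preserve the
  span of the multilinearity relations, so the identities descend from the free vector
  space on words to the tensor powers.
\<close>

interpretation fmod: module "fscale :: 'k::field \<Rightarrow> ('h list \<Rightarrow> 'k) \<Rightarrow> _"
  by standard (auto simp: fscale_def fun_eq_iff algebra_simps)

subsection \<open>Finitely supported functions on words\<close>

definition supp :: "('h list \<Rightarrow> 'k::zero) \<Rightarrow> 'h list set" where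
  "supp F = {w. F w \<noteq> 0}"

lemma sum_fun_apply: "(\<Sum>a\<in>A. f a) z = (\<Sum>a\<in>A. f a z)"
  by (induction A rule: infinite_finite_induct) auto

lemma supp_zero [simp]: "supp 0 = {}"
  by (simp add: supp_def)

lemma supp_fbasis [simp]: "supp (fbasis w :: 'h list \<Rightarrow> 'k::field) = {w}"
  by (auto simp: supp_def fbasis_def)

lemma finite_supp_add:
  "finite (supp F) \<Longrightarrow> finite (supp G) \<Longrightarrow> finite (supp (F + G :: 'h list \<Rightarrow> 'k::field))"
  by (rule finite_subset[of _ "supp F \<union> supp G"]) (auto simp: supp_def)

lemma finite_supp_diff:
  "finite (supp F) \<Longrightarrow> finite (supp G) \<Longrightarrow> finite (supp (F - G :: 'h list \<Rightarrow> 'k::field))"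
  by (rule finite_subset[of _ "supp F \<union> supp G"]) (auto simp: supp_def)

lemma finite_supp_fscale:
  "finite (supp F) \<Longrightarrow> finite (supp (fscale c F :: 'h list \<Rightarrow> 'k::field))"
  by (rule finite_subset[of _ "supp F"]) (auto simp: supp_def fscale_def)

lemma finite_supp_sum:
  "(\<And>a. a \<in> A \<Longrightarrow> finite (supp (X a :: 'h list \<Rightarrow> 'k::field))) \<Longrightarrow> finite (supp (\<Sum>a\<in>A. X a))"
  by (induction A rule: infinite_finite_induct) (auto intro: finite_supp_add simp del: plus_fun_apply)

lemma fbasis_expansion:
  assumes "finite A" "supp F \<subseteq> A"
  shows "F = (\<Sum>w\<in>A. fscale (F w) (fbasis w))"
proof
  fix z
  have "(\<Sum>w\<in>A. fscale (F w) (fbasis w)) z = (\<Sum>w\<in>A. if w = z then F w else 0)"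
    by (auto simp: sum_fun_apply fbasis_def fscale_def intro: sum.cong)
  also have "\<dots> = F z"
    using assms by (auto simp: supp_def)
  finally show "F z = (\<Sum>w\<in>A. fscale (F w) (fbasis w)) z" by simp
qed

lemma tensor_rep_iff: "F \<in> tensor_rep n \<longleftrightarrow> finite (supp F) \<and> (\<forall>w\<in>supp F. length w = n)"
  by (auto simp: tensor_rep_def supp_def)

lemma tensor_rep_sum:
  "finite A \<Longrightarrow> (\<And>a. a \<in> A \<Longrightarrow> X a \<in> tensor_rep n) \<Longrightarrow> (\<Sum>a\<in>A. fscale (c a) (X a)) \<in> tensor_rep n"
proof (induction A rule: finite_induct)
  case (insert x A)
  let ?Y = "fscale (c x) (X x)" and ?S = "\<Sum>a\<in>A. fscale (c a) (X a)"
  have "?Y \<in> tensor_rep n" "?S \<in> tensor_rep n"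
    using insert by (auto simp: tensor_rep_iff supp_def fscale_def intro: finite_supp_fscale)
  moreover have "supp (?Y + ?S) \<subseteq> supp ?Y \<union> supp ?S"
    by (auto simp: supp_def)
  ultimately have "?Y + ?S \<in> tensor_rep n"
    unfolding tensor_rep_iff using finite_supp_add by blast
  then show ?case using insert.hyps by (simp del: plus_fun_apply)
qed (simp add: tensor_rep_iff)

text \<open>Linearity is only required on finitely supported functions, since
  \<open>delta_tensor_id\<close> is defined by a sum over the support.\<close>

definition finsupp_linear :: "(('h list \<Rightarrow> 'k::field) \<Rightarrow> ('h list \<Rightarrow> 'k)) \<Rightarrow> bool" where
  "finsupp_linear L \<longleftrightarrow>
     (\<forall>F G. finite (supp F) \<longrightarrow> finite (supp G) \<longrightarrow> L (F + G) = L F + L G)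
     \<and> (\<forall>c F. finite (supp F) \<longrightarrow> L (fscale c F) = fscale c (L F))"

lemma finsupp_linearI:
  assumes "\<And>F G. L (F + G) = L F + L G" "\<And>c F. L (fscale c F) = fscale c (L F)"
  shows "finsupp_linear L"
  using assms by (simp add: finsupp_linear_def)

lemma finsupp_linear_zero:
  assumes "finsupp_linear L" shows "L 0 = 0"
proof -
  have "fscale 0 F = 0" for F :: "'h list \<Rightarrow> 'k::field"
    by (simp add: fun_eq_iff fscale_def)
  with assms show ?thesis
    unfolding finsupp_linear_def by (metis finite.emptyI supp_zero)
qed

lemma finsupp_linear_sum:
  assumes L: "finsupp_linear L" and "finite A" and "\<And>a. a \<in> A \<Longrightarrow> finite (supp (X a))"
  shows "L (\<Sum>a\<in>A. fscale (c a) (X a)) = (\<Sum>a\<in>A. fscale (c a) (L (X a)))"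
  using assms(2,3)
proof (induction A rule: finite_induct)
  case (insert x A)
  have "finite (supp (\<Sum>a\<in>A. fscale (c a) (X a)))"
    using insert.prems by (intro finite_supp_sum finite_supp_fscale) auto
  with insert L show ?case
    by (simp add: finsupp_linear_def finite_supp_fscale del: plus_fun_apply)
qed (simp add: finsupp_linear_zero[OF L])

lemma finsupp_linear_expansion:
  assumes L: "finsupp_linear L" and F: "finite (supp F)"
  shows "L F = (\<Sum>w\<in>supp F. fscale (F w) (L (fbasis w)))"
proof -
  have "L F = L (\<Sum>w\<in>supp F. fscale (F w) (fbasis w))"
    using fbasis_expansion[OF F subset_refl] by simp
  also have "\<dots> = (\<Sum>w\<in>supp F. fscale (F w) (L (fbasis w)))"
    using F by (simp add: finsupp_linear_sum[OF L])
  finally show ?thesis .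
qed

lemma finsupp_linear_fscale:
  "finsupp_linear L \<Longrightarrow> finite (supp F) \<Longrightarrow> L (fscale c F) = fscale c (L F)"
  by (simp add: finsupp_linear_def)

lemma finsupp_linear_diff:
  assumes L: "finsupp_linear L" and "finite (supp F)" "finite (supp G)"
  shows "L (F - G) = L F - L G"
proof -
  have "F - G = F + fscale (-1) G" "L F + fscale (-1) (L G) = L F - L G"
    by (simp_all add: fun_eq_iff fscale_def)
  with assms show ?thesis
    unfolding finsupp_linear_def by (metis finite_supp_fscale)
qed

lemma tensor_relE:
  assumes "r \<in> tensor_rel scale"
  obtains (add) xs x y ys
    where "r = fbasis (xs @ [x + y] @ ys) - fbasis (xs @ [x] @ ys) - fbasis (xs @ [y] @ ys)"
  | (scale) xs c x ys where "r = fbasis (xs @ [scale c x] @ ys) - fscale c (fbasis (xs @ [x] @ ys))"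
  using assms unfolding tensor_rel_def by auto

lemma tensor_null_add_rel:
  "fbasis (xs @ [x + y] @ ys) - fbasis (xs @ [x] @ ys) - fbasis (xs @ [y] @ ys) \<in> tensor_null scale"
  unfolding tensor_null_def tensor_rel_def by (rule fmod.span_base) blast

lemma tensor_null_scale_rel:
  "fbasis (xs @ [scale c x] @ ys) - fscale c (fbasis (xs @ [x] @ ys)) \<in> tensor_null scale"
  unfolding tensor_null_def tensor_rel_def by (rule fmod.span_base) blast

lemma finite_supp_tensor_rel: "r \<in> tensor_rel scale \<Longrightarrow> finite (supp r)"
  by (erule tensor_relE) (simp_all add: finite_supp_diff finite_supp_fscale)

lemma tensor_null_add: "A \<in> tensor_null scale \<Longrightarrow> B \<in> tensor_null scale \<Longrightarrow> A + B \<in> tensor_null scale"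
  unfolding tensor_null_def by (rule fmod.span_add)

lemma tensor_null_fscale: "A \<in> tensor_null scale \<Longrightarrow> fscale c A \<in> tensor_null scale"
  unfolding tensor_null_def by (rule fmod.span_scale)

lemma tensor_null_zero: "0 \<in> tensor_null scale"
  unfolding tensor_null_def by (rule fmod.span_zero)

lemma tensor_null_sum:
  "(\<And>a. a \<in> A \<Longrightarrow> X a \<in> tensor_null scale) \<Longrightarrow> (\<Sum>a\<in>A. X a) \<in> tensor_null scale"
  unfolding tensor_null_def by (rule fmod.span_sum)

lemma tensor_null_image:
  assumes L: "finsupp_linear L" and rel: "\<And>r. r \<in> tensor_rel scale \<Longrightarrow> L r \<in> tensor_null scale"
    and N: "N \<in> tensor_null scale"
  shows "L N \<in> tensor_null scale"
proof -
  from N obtain R c where R: "finite R" "R \<subseteq> tensor_rel scale" and N_eq: "N = (\<Sum>r\<in>R. fscale (c r) r)"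
    unfolding tensor_null_def fmod.span_explicit by blast
  have "L N = (\<Sum>r\<in>R. fscale (c r) (L r))"
    unfolding N_eq using R by (intro finsupp_linear_sum[OF L]) (auto intro: finite_supp_tensor_rel)
  also have "\<dots> \<in> tensor_null scale"
    using R rel by (intro tensor_null_sum tensor_null_fscale) auto
  finally show ?thesis .
qed

lemma tensor_eq_refl: "tensor_eq scale F F"
  by (simp add: tensor_eq_def tensor_null_zero)

lemma tensor_eq_trans: "tensor_eq scale F G \<Longrightarrow> tensor_eq scale G H \<Longrightarrow> tensor_eq scale F H"
  unfolding tensor_eq_def using tensor_null_add by fastforce

text \<open>\<open>tensor_word m t K\<close> represents \<open>K \<otimes> t\<close> for \<open>K\<close> of degree \<open>m\<close>.\<close>

definition tensor_word :: "nat \<Rightarrow> 'h list \<Rightarrow> ('h list \<Rightarrow> 'k::zero) \<Rightarrow> ('h list \<Rightarrow> 'k)" where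
  "tensor_word m t K = (\<lambda>zs. if m \<le> length zs \<and> drop m zs = t then K (take m zs) else 0)"

lemma tensor_word_add:
  "tensor_word m t (F + G :: 'h list \<Rightarrow> 'k::field) = tensor_word m t F + tensor_word m t G"
  by (simp add: tensor_word_def fun_eq_iff)

lemma tensor_word_diff:
  "tensor_word m t (F - G :: 'h list \<Rightarrow> 'k::field) = tensor_word m t F - tensor_word m t G"
  by (simp add: tensor_word_def fun_eq_iff)

lemma tensor_word_fscale:
  "tensor_word m t (fscale c F :: 'h list \<Rightarrow> 'k::field) = fscale c (tensor_word m t F)"
  by (simp add: tensor_word_def fscale_def fun_eq_iff)

lemma finsupp_linear_tensor_word: "finsupp_linear (tensor_word m t :: ('h list \<Rightarrow> 'k::field) \<Rightarrow> _)"
  by (intro finsupp_linearI tensor_word_add tensor_word_fscale)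

lemma tensor_word_fbasis:
  "tensor_word m t (fbasis u :: 'h list \<Rightarrow> 'k::field) = (if length u = m then fbasis (u @ t) else 0)"
proof -
  have "(zs = u @ t) \<longleftrightarrow> (m \<le> length zs \<and> drop m zs = t \<and> take m zs = u)" if "length u = m" for zs
    using that by (auto simp: append_eq_conv_conj) (metis append_take_drop_id)
  then show ?thesis
    by (auto simp: tensor_word_def fbasis_def fun_eq_iff)
qed

lemma tensor_null_tensor_word:
  assumes "N \<in> tensor_null scale"
  shows "tensor_word m t N \<in> tensor_null scale"
proof (rule tensor_null_image[OF finsupp_linear_tensor_word _ assms])
  fix r assume "r \<in> tensor_rel scale"
  then show "tensor_word m t r \<in> tensor_null scale"
  proof (cases rule: tensor_relE)
    case (add xs x y ys)
    then show ?thesis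
      using tensor_null_add_rel[of xs x y "ys @ t" scale]
      by (simp add: tensor_word_diff tensor_word_fbasis tensor_null_zero)
  next
    case (scale xs c x ys)
    then show ?thesis
      using tensor_null_scale_rel[of xs scale c x "ys @ t"]
      by (simp add: tensor_word_diff tensor_word_fscale tensor_word_fbasis tensor_null_zero)
  qed
qed

lemma supp_tensor_word: "supp (tensor_word m t K) \<subseteq> (\<lambda>u. u @ t) ` supp K"
proof
  fix zs assume "zs \<in> supp (tensor_word m t K)"
  then have "m \<le> length zs" "drop m zs = t" "K (take m zs) \<noteq> 0"
    by (auto simp: supp_def tensor_word_def split: if_splits)
  then show "zs \<in> (\<lambda>u. u @ t) ` supp K"
    by (intro image_eqI[of _ _ "take m zs"]) (auto simp: supp_def)
qed

lemma tensor_word_rep: "K \<in> tensor_rep m \<Longrightarrow> tensor_word m t K \<in> tensor_rep (m + length t)"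
  using supp_tensor_word[of m t K] by (auto simp: tensor_rep_iff intro: finite_subset)

lemma tensor_word_expansion:
  assumes K: "K \<in> tensor_rep m"
  shows "tensor_word m t K = (\<Sum>u\<in>supp K. fscale (K u) (fbasis (u @ t)))"
  using K finsupp_linear_expansion[OF finsupp_linear_tensor_word, of K m t]
  by (auto simp: tensor_rep_iff tensor_word_fbasis intro: sum.cong)

lemma tensor_word_tensor_word:
  assumes k: "length s = k"
  shows "tensor_word (m + k) t (tensor_word m s L) = tensor_word m (s @ t) L"
proof -
  have split: "(D = s @ t) \<longleftrightarrow> (k \<le> length D \<and> take k D = s \<and> drop k D = t)" for D
    using k by (auto simp: append_eq_conv_conj) (metis append_take_drop_id)
  have "drop m (take (m + k) zs) = take k (drop m zs)" "drop (m + k) zs = drop k (drop m zs)"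
    for zs :: "'a list"
    by (simp_all add: drop_take add.commute)
  then show ?thesis
    unfolding tensor_word_def split by (auto simp del: drop_drop simp: fun_eq_iff min_def)
qed

subsection \<open>The map \<open>\<Delta> \<otimes> id\<close>\<close>

definition delta_word :: "('h \<Rightarrow> ('h list \<Rightarrow> 'k)) \<Rightarrow> 'h list \<Rightarrow> ('h list \<Rightarrow> 'k::field)" where
  "delta_word D w = (if w = [] then 0 else tensor_word 2 (tl w) (D (hd w)))"

lemma delta_tensor_id_expansion:
  assumes "finite A" "supp F \<subseteq> A"
  shows "delta_tensor_id D F = (\<Sum>w\<in>A. fscale (F w) (delta_word D w))"
proof (rule ext)
  fix zs
  have "delta_tensor_id D F zs = (\<Sum>w\<in>supp F. F w * delta_word D w zs)"
    unfolding delta_tensor_id_def supp_def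
    by (intro sum.cong refl) (auto simp: delta_word_def tensor_word_def)
  also have "\<dots> = (\<Sum>w\<in>A. F w * delta_word D w zs)"
    using assms by (intro sum.mono_neutral_left) (auto simp: supp_def)
  finally show "delta_tensor_id D F zs = (\<Sum>w\<in>A. fscale (F w) (delta_word D w)) zs"
    by (simp add: sum_fun_apply fscale_def)
qed

lemma finsupp_linear_delta_tensor_id: "finsupp_linear (delta_tensor_id D)"
  unfolding finsupp_linear_def
proof (intro conjI allI impI)
  fix F G :: "'a list \<Rightarrow> 'b" assume fin: "finite (supp F)" "finite (supp G)"
  have expand: "delta_tensor_id D H = (\<Sum>w\<in>supp F \<union> supp G. fscale (H w) (delta_word D w))"
    if "supp H \<subseteq> supp F \<union> supp G" for H
    using fin that by (intro delta_tensor_id_expansion) auto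
  have "supp (F + G) \<subseteq> supp F \<union> supp G"
    by (auto simp: supp_def)
  then show "delta_tensor_id D (F + G) = delta_tensor_id D F + delta_tensor_id D G"
    by (simp add: expand del: plus_fun_apply)
       (simp only: plus_fun_apply fmod.scale_left_distrib sum.distrib)
next
  fix c and F :: "'a list \<Rightarrow> 'b" assume fin: "finite (supp F)"
  have "supp (fscale c F) \<subseteq> supp F"
    by (auto simp: supp_def fscale_def)
  then show "delta_tensor_id D (fscale c F) = fscale c (delta_tensor_id D F)"
    using fin by (simp add: delta_tensor_id_expansion fmod.scale_sum_right, simp add: fscale_def)
qed

lemma delta_tensor_id_fbasis: "delta_tensor_id D (fbasis w) = delta_word D w"
proof -
  have "delta_tensor_id D (fbasis w) = (\<Sum>v\<in>{w}. fscale (fbasis w v) (delta_word D v))"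
    by (rule delta_tensor_id_expansion) auto
  then show ?thesis
    by (simp add: fbasis_def)
qed

lemma delta_tensor_id_sum:
  assumes "finite A" "\<And>a. a \<in> A \<Longrightarrow> finite (supp (X a))"
  shows "delta_tensor_id D (\<Sum>a\<in>A. fscale (c a) (X a)) = (\<Sum>a\<in>A. fscale (c a) (delta_tensor_id D (X a)))"
  using finsupp_linear_sum[OF finsupp_linear_delta_tensor_id assms] .

locale coprod_rep =
  fixes D :: "'h \<Rightarrow> ('h list \<Rightarrow> 'k::field)"
  assumes D_rep: "D x \<in> tensor_rep 2"
begin

lemma delta_word_rep: "length w = Suc m \<Longrightarrow> delta_word D w \<in> tensor_rep (Suc (Suc m))"
  using tensor_word_rep[OF D_rep, of "tl w" "hd w"] by (cases w) (auto simp: delta_word_def)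

lemma finite_supp_delta_word: "finite (supp (delta_word D w))"
  using delta_word_rep[of w "length w - 1"] by (cases w) (auto simp: delta_word_def tensor_rep_iff)

lemma delta_tensor_id_rep:
  assumes F: "F \<in> tensor_rep (Suc m)"
  shows "delta_tensor_id D F \<in> tensor_rep (Suc (Suc m))"
proof -
  have fin: "finite (supp F)"
    using F by (simp add: tensor_rep_iff)
  show ?thesis
    unfolding delta_tensor_id_expansion[OF fin subset_refl]
    using F by (intro tensor_rep_sum fin delta_word_rep) (auto simp: tensor_rep_iff)
qed

end

locale linear_coprod = coprod_rep D for D :: "'h::ab_group_add \<Rightarrow> ('h list \<Rightarrow> 'k::field)" +
  fixes scale :: "'k \<Rightarrow> 'h \<Rightarrow> 'h"
  assumes D_add: "tensor_eq scale (D (x + y)) (D x + D y)"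
    and D_scale: "tensor_eq scale (D (scale c x)) (fscale c (D x))"
begin

text \<open>Additivity and homogeneity of \<open>\<Delta>\<close> handle a relation in the first slot; a relation
  in a later slot is carried along by \<open>D(h) \<otimes> -\<close> to a combination of relations.\<close>

lemma tensor_null_delta_word_add:
  "delta_word D (xs @ [x + y] @ ys) - delta_word D (xs @ [x] @ ys) - delta_word D (xs @ [y] @ ys)
   \<in> tensor_null scale"
proof (cases xs)
  case Nil
  have "delta_word D (xs @ [x + y] @ ys) - delta_word D (xs @ [x] @ ys) - delta_word D (xs @ [y] @ ys)
        = tensor_word 2 ys (D (x + y) - (D x + D y))"
    using Nil
    by (simp add: delta_word_def tensor_word_diff tensor_word_add diff_diff_eq del: plus_fun_apply)
  also have "\<dots> \<in> tensor_null scale"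
    using D_add by (intro tensor_null_tensor_word) (simp add: tensor_eq_def)
  finally show ?thesis .
next
  case (Cons h xs')
  have "delta_word D (xs @ [x + y] @ ys) - delta_word D (xs @ [x] @ ys) - delta_word D (xs @ [y] @ ys)
        = (\<Sum>u\<in>supp (D h). fscale (D h u) (fbasis ((u @ xs') @ [x + y] @ ys)
            - fbasis ((u @ xs') @ [x] @ ys) - fbasis ((u @ xs') @ [y] @ ys)))"
    using Cons by (simp add: delta_word_def tensor_word_expansion[OF D_rep] sum_subtractf
        fmod.scale_right_diff_distrib)
  also have "\<dots> \<in> tensor_null scale"
    by (intro tensor_null_sum tensor_null_fscale tensor_null_add_rel)
  finally show ?thesis .
qed

lemma tensor_null_delta_word_scale:
  "delta_word D (xs @ [scale c x] @ ys) - fscale c (delta_word D (xs @ [x] @ ys)) \<in> tensor_null scale"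
proof (cases xs)
  case Nil
  have "delta_word D (xs @ [scale c x] @ ys) - fscale c (delta_word D (xs @ [x] @ ys))
        = tensor_word 2 ys (D (scale c x) - fscale c (D x))"
    using Nil by (simp add: delta_word_def tensor_word_diff tensor_word_fscale)
  also have "\<dots> \<in> tensor_null scale"
    using D_scale by (intro tensor_null_tensor_word) (simp add: tensor_eq_def)
  finally show ?thesis .
next
  case (Cons h xs')
  have "delta_word D (xs @ [scale c x] @ ys) - fscale c (delta_word D (xs @ [x] @ ys))
        = (\<Sum>u\<in>supp (D h). fscale (D h u) (fbasis ((u @ xs') @ [scale c x] @ ys)
            - fscale c (fbasis ((u @ xs') @ [x] @ ys))))"
    using Cons by (simp add: delta_word_def tensor_word_expansion[OF D_rep] sum_subtractf
        fmod.scale_right_diff_distrib fmod.scale_sum_right mult.commute)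
  also have "\<dots> \<in> tensor_null scale"
    by (intro tensor_null_sum tensor_null_fscale tensor_null_scale_rel)
  finally show ?thesis .
qed

lemma delta_tensor_id_tensor_eq:
  assumes F: "finite (supp F)" and G: "finite (supp G)" and eq: "tensor_eq scale F G"
  shows "tensor_eq scale (delta_tensor_id D F) (delta_tensor_id D G)"
proof -
  note lin = finsupp_linear_delta_tensor_id[of D]
  have "delta_tensor_id D (F - G) \<in> tensor_null scale"
  proof (rule tensor_null_image[OF lin _ eq[unfolded tensor_eq_def]])
    fix r assume "r \<in> tensor_rel scale"
    then show "delta_tensor_id D r \<in> tensor_null scale"
    proof (cases rule: tensor_relE)
      case (add xs x y ys)
      then show ?thesis
        using tensor_null_delta_word_add[of xs x y ys]
        by (simp add: finsupp_linear_diff[OF lin] finite_supp_diff delta_tensor_id_fbasis)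
    next
      case (scale xs c x ys)
      then show ?thesis
        using tensor_null_delta_word_scale[of xs c x ys]
        by (simp add: finsupp_linear_diff[OF lin] finsupp_linear_fscale[OF lin] finite_supp_fscale
            delta_tensor_id_fbasis)
    qed
  qed
  then show ?thesis
    using finsupp_linear_diff[OF lin F G] by (simp add: tensor_eq_def)
qed

end

subsection \<open>Permuting the last tensor factors\<close>

lemma permute_list_inv_cancel:
  assumes "\<sigma> permutes {..<length l}"
  shows "permute_list (inv \<sigma>) (permute_list \<sigma> l) = l"
    and "permute_list \<sigma> (permute_list (inv \<sigma>) l) = l"
  using permute_list_compose[OF permutes_inv[OF assms], of \<sigma>] permutes_inv_o(1)[OF assms]
    permute_list_compose[OF assms, of "inv \<sigma>"] permutes_inv_o(2)[OF assms]
  by simp_all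

lemma permute_list_eq_iff:
  assumes "\<sigma> permutes {..<n}" "length t = n"
  shows "permute_list \<sigma> r = t \<longleftrightarrow> r = permute_list (inv \<sigma>) t"
  using assms permute_list_inv_cancel[of \<sigma> r] permute_list_inv_cancel[of \<sigma> t] by auto

lemma permute_list_update:
  assumes \<tau>: "\<tau> permutes {..<length l}" and k: "k < length l"
  shows "permute_list \<tau> (l[k := a]) = (permute_list \<tau> l)[inv \<tau> k := a]"
proof (rule nth_equalityI)
  fix i assume "i < length (permute_list \<tau> (l[k := a]))"
  then have i: "i < length l" by simp
  have "\<tau> i = k \<longleftrightarrow> i = inv \<tau> k"
    using permutes_inv_eq[OF \<tau>] by metis
  then show "permute_list \<tau> (l[k := a]) ! i = (permute_list \<tau> l)[inv \<tau> k := a] ! i"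
    using i \<tau> permutes_in_image[OF \<tau>, of i] by (auto simp: permute_list_nth nth_list_update)
qed simp

lemma permute_list_append:
  assumes "\<sigma> permutes {..<length xs}"
  shows "permute_list \<sigma> (xs @ ys) = permute_list \<sigma> xs @ ys"
proof (rule nth_equalityI)
  fix i assume "i < length (permute_list \<sigma> (xs @ ys))"
  then show "permute_list \<sigma> (xs @ ys) ! i = (permute_list \<sigma> xs @ ys) ! i"
    using assms permutes_in_image[OF assms, of i] permutes_not_in[OF assms, of i]
    by (cases "i < length xs") (auto simp: permute_list_def nth_append)
qed simp

definition perm_tail :: "(nat \<Rightarrow> nat) \<Rightarrow> 'h list \<Rightarrow> 'h list" where
  "perm_tail \<sigma> zs = hd zs # permute_list \<sigma> (tl zs)"

lemma id_tensor_perm_Cons [simp]: "id_tensor_perm \<sigma> F (z # r) = F (z # permute_list \<sigma> r)"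
  by (simp add: id_tensor_perm_def)

lemma id_tensor_perm_id: "id_tensor_perm id F = F"
  by (simp add: id_tensor_perm_def fun_eq_iff)

lemma id_tensor_perm_add:
  "id_tensor_perm \<sigma> (F + G :: 'h list \<Rightarrow> 'k::field) = id_tensor_perm \<sigma> F + id_tensor_perm \<sigma> G"
  by (simp add: id_tensor_perm_def fun_eq_iff)

lemma id_tensor_perm_diff:
  "id_tensor_perm \<sigma> (F - G :: 'h list \<Rightarrow> 'k::field) = id_tensor_perm \<sigma> F - id_tensor_perm \<sigma> G"
  by (simp add: id_tensor_perm_def fun_eq_iff)

lemma id_tensor_perm_fscale:
  "id_tensor_perm \<sigma> (fscale c F :: 'h list \<Rightarrow> 'k::field) = fscale c (id_tensor_perm \<sigma> F)"
  by (simp add: id_tensor_perm_def fscale_def fun_eq_iff)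

lemma finsupp_linear_id_tensor_perm: "finsupp_linear (id_tensor_perm \<sigma> :: ('h list \<Rightarrow> 'k::field) \<Rightarrow> _)"
  by (intro finsupp_linearI id_tensor_perm_add id_tensor_perm_fscale)

lemma perm_tail_inv:
  assumes "\<sigma> permutes {..<n}" "length zs = Suc n"
  shows "perm_tail (inv \<sigma>) (perm_tail \<sigma> zs) = zs"
  using assms permute_list_inv_cancel(1)[of \<sigma> "tl zs"] by (cases zs) (auto simp: perm_tail_def)

lemma id_tensor_perm_fbasis:
  assumes \<sigma>: "\<sigma> permutes {..<n}" and u: "length u = Suc n"
  shows "id_tensor_perm \<sigma> (fbasis u :: 'h list \<Rightarrow> 'k::field) = fbasis (perm_tail (inv \<sigma>) u)"
proof -
  obtain a t where u: "u = a # t" and t: "length t = n"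
    using u by (cases u) auto
  have "z # permute_list \<sigma> r = u \<longleftrightarrow> z # r = perm_tail (inv \<sigma>) u" for z r
    using permute_list_eq_iff[OF \<sigma> t, of r] u by (auto simp: perm_tail_def)
  then show ?thesis
    by (auto simp: fun_eq_iff fbasis_def id_tensor_perm_def perm_tail_def u neq_Nil_conv)
qed

text \<open>Permuting the tail moves each slot to a slot.\<close>

lemma id_tensor_perm_fbasis_slot:
  assumes \<sigma>: "\<sigma> permutes {..<n}" and len: "length (xs @ [x] @ ys) = Suc n"
  obtains ps qs where "\<And>v. id_tensor_perm \<sigma> (fbasis (xs @ [v] @ ys)) = fbasis (ps @ [v] @ qs)"
proof -
  let ?l = "xs @ [x] @ ys"
  obtain j where j: "j < Suc n"
    and upd: "\<And>v. perm_tail (inv \<sigma>) (?l[length xs := v]) = (perm_tail (inv \<sigma>) ?l)[j := v]"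
  proof (cases xs)
    case Nil
    then show thesis
      by (intro that[of 0]) (simp_all add: perm_tail_def)
  next
    case (Cons h xs')
    have \<tau>: "inv \<sigma> permutes {..<length (xs' @ [x] @ ys)}"
      using permutes_inv[OF \<sigma>] len Cons by simp
    have upd: "permute_list (inv \<sigma>) ((xs' @ [x] @ ys)[length xs' := v])
          = (permute_list (inv \<sigma>) (xs' @ [x] @ ys))[\<sigma> (length xs') := v]" for v
      using permute_list_update[OF \<tau>, of "length xs'" v] by (simp add: permutes_inv_inv[OF \<sigma>])
    show thesis
    proof (rule that)
      show "Suc (\<sigma> (length xs')) < Suc n"
        using permutes_in_image[OF \<sigma>] len Cons by simp
      show "perm_tail (inv \<sigma>) (?l[length xs := v])
            = (perm_tail (inv \<sigma>) ?l)[Suc (\<sigma> (length xs')) := v]" for v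
        using upd[of v] unfolding Cons perm_tail_def by simp
    qed
  qed
  let ?l' = "perm_tail (inv \<sigma>) ?l"
  have j': "j < length ?l'"
    using j len by (simp add: perm_tail_def)
  have "id_tensor_perm \<sigma> (fbasis (xs @ [v] @ ys)) = fbasis (take j ?l' @ [v] @ drop (Suc j) ?l')" for v
  proof -
    have "id_tensor_perm \<sigma> (fbasis (xs @ [v] @ ys)) = fbasis (perm_tail (inv \<sigma>) (?l[length xs := v]))"
      using id_tensor_perm_fbasis[OF \<sigma>, of "xs @ [v] @ ys"] len by simp
    also have "\<dots> = fbasis (take j ?l' @ [v] @ drop (Suc j) ?l')"
      unfolding upd upd_conv_take_nth_drop[OF j'] by simp
    finally show ?thesis .
  qed
  then show thesis by (rule that)
qed

definition restrict_length :: "nat \<Rightarrow> ('h list \<Rightarrow> 'k::zero) \<Rightarrow> ('h list \<Rightarrow> 'k)" where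
  "restrict_length n F = (\<lambda>w. if length w = n then F w else 0)"

lemma finsupp_linear_id_tensor_perm_restrict:
  "finsupp_linear (\<lambda>F. id_tensor_perm \<sigma> (restrict_length n F) :: 'h list \<Rightarrow> 'k::field)"
proof (rule finsupp_linearI)
  show "id_tensor_perm \<sigma> (restrict_length n (F + G))
        = id_tensor_perm \<sigma> (restrict_length n F) + id_tensor_perm \<sigma> (restrict_length n G)"
    for F G :: "'h list \<Rightarrow> 'k"
    unfolding id_tensor_perm_add[symmetric]
    by (rule arg_cong[where f = "id_tensor_perm \<sigma>"]) (simp add: restrict_length_def fun_eq_iff)
  show "id_tensor_perm \<sigma> (restrict_length n (fscale c F))
        = fscale c (id_tensor_perm \<sigma> (restrict_length n F))"
    for c and F :: "'h list \<Rightarrow> 'k"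
    unfolding id_tensor_perm_fscale[symmetric]
    by (rule arg_cong[where f = "id_tensor_perm \<sigma>"])
       (simp add: restrict_length_def fun_eq_iff fscale_def)
qed

text \<open>The restriction to words of length \<open>n + 1\<close> discards the words on which
  \<open>permute_list \<sigma>\<close> is not a permutation of the positions.\<close>

lemma id_tensor_perm_restrict_fbasis_slot:
  assumes \<sigma>: "\<sigma> permutes {..<n}"
  shows "(\<exists>ps qs. \<forall>v. id_tensor_perm \<sigma> (restrict_length (Suc n) (fbasis (xs @ [v] @ ys)))
                     = (fbasis (ps @ [v] @ qs) :: 'h list \<Rightarrow> 'k::field))
         \<or> (\<forall>v. id_tensor_perm \<sigma> (restrict_length (Suc n) (fbasis (xs @ [v] @ ys)))
                 = (0 :: 'h list \<Rightarrow> 'k))"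
proof (cases "length (xs @ [undefined] @ ys) = Suc n")
  case True
  then have restrict:
    "restrict_length (Suc n) (fbasis (xs @ [v] @ ys)) = (fbasis (xs @ [v] @ ys) :: 'h list \<Rightarrow> 'k)" for v
    by (auto simp: restrict_length_def fbasis_def fun_eq_iff)
  show ?thesis
  proof (rule id_tensor_perm_fbasis_slot[OF \<sigma> True])
    fix ps qs
    assume "\<And>v. id_tensor_perm \<sigma> (fbasis (xs @ [v] @ ys) :: 'h list \<Rightarrow> 'k) = fbasis (ps @ [v] @ qs)"
    then show ?thesis
      unfolding restrict by blast
  qed
next
  case False
  then have "restrict_length (Suc n) (fbasis (xs @ [v] @ ys)) = (0 :: 'h list \<Rightarrow> 'k)" for v
    by (auto simp: restrict_length_def fbasis_def fun_eq_iff)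
  then show ?thesis
    by (simp add: id_tensor_perm_def fun_eq_iff)
qed

lemma tensor_null_id_tensor_perm:
  fixes N :: "'h::ab_group_add list \<Rightarrow> 'k::field"
  assumes \<sigma>: "\<sigma> permutes {..<n}" and N: "N \<in> tensor_null scale"
    and deg: "\<And>w. N w \<noteq> 0 \<Longrightarrow> length w = Suc n"
  shows "id_tensor_perm \<sigma> N \<in> tensor_null scale"
proof -
  let ?L = "\<lambda>F. id_tensor_perm \<sigma> (restrict_length (Suc n) F) :: 'h list \<Rightarrow> 'k"
  have lin: "finsupp_linear ?L"
    by (rule finsupp_linear_id_tensor_perm_restrict)
  note slot = id_tensor_perm_restrict_fbasis_slot[OF \<sigma>, where 'k = 'k]
  have "?L N \<in> tensor_null scale"
  proof (rule tensor_null_image[OF lin _ N])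
    fix r assume "r \<in> tensor_rel scale"
    then show "?L r \<in> tensor_null scale"
    proof (cases rule: tensor_relE)
      case (add xs x y ys)
      then have "?L r = ?L (fbasis (xs @ [x + y] @ ys)) - ?L (fbasis (xs @ [x] @ ys))
                        - ?L (fbasis (xs @ [y] @ ys))"
        by (simp add: finsupp_linear_diff[OF lin] finite_supp_diff)
      with slot[of xs ys] tensor_null_add_rel[of _ x y _ scale] show ?thesis
        by (auto simp: tensor_null_zero)
    next
      case (scale xs c x ys)
      then have "?L r = ?L (fbasis (xs @ [scale c x] @ ys)) - fscale c (?L (fbasis (xs @ [x] @ ys)))"
        by (simp add: finsupp_linear_diff[OF lin] finsupp_linear_fscale[OF lin] finite_supp_fscale)
      with slot[of xs ys] tensor_null_scale_rel[of _ scale c x] show ?thesis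
        by (auto simp: tensor_null_zero)
    qed
  qed
  moreover have "restrict_length (Suc n) N = N"
    using deg by (auto simp: restrict_length_def fun_eq_iff)
  ultimately show ?thesis by simp
qed

lemma id_tensor_perm_rep:
  assumes \<sigma>: "\<sigma> permutes {..<n}" and F: "F \<in> tensor_rep (Suc n)"
  shows "id_tensor_perm \<sigma> F \<in> tensor_rep (Suc n)"
proof -
  have "zs \<in> perm_tail (inv \<sigma>) ` supp F \<and> length zs = Suc n" if "zs \<in> supp (id_tensor_perm \<sigma> F)" for zs
  proof -
    have "zs \<noteq> []"
      using that F by (auto simp: supp_def id_tensor_perm_def tensor_rep_def)
    then have nz: "F (perm_tail \<sigma> zs) \<noteq> 0"
      using that by (auto simp: supp_def id_tensor_perm_def perm_tail_def)
    with F \<open>zs \<noteq> []\<close> have len: "length zs = Suc n"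
      by (cases zs) (auto simp: tensor_rep_def perm_tail_def)
    then have "zs = perm_tail (inv \<sigma>) (perm_tail \<sigma> zs)"
      by (rule perm_tail_inv[OF \<sigma>, symmetric])
    with nz len show ?thesis
      by (auto simp: supp_def)
  qed
  with F show ?thesis
    by (auto simp: tensor_rep_iff intro: finite_subset[of _ "perm_tail (inv \<sigma>) ` supp F"])
qed

lemma id_tensor_perm_comp:
  assumes \<sigma>: "\<sigma> permutes {..<n}" and \<tau>: "\<tau> permutes {..<n}" and F: "F \<in> tensor_rep (Suc n)"
  shows "id_tensor_perm \<sigma> (id_tensor_perm \<tau> F) = id_tensor_perm (\<sigma> \<circ> \<tau>) F"
proof
  fix zs
  show "id_tensor_perm \<sigma> (id_tensor_perm \<tau> F) zs = id_tensor_perm (\<sigma> \<circ> \<tau>) F zs"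
  proof (cases zs)
    case (Cons z r)
    show ?thesis
    proof (cases "length r = n")
      case True
      then show ?thesis
        using Cons permute_list_compose[of \<tau> r \<sigma>] \<tau> by simp
    next
      case False
      then have "F (z # permute_list \<tau> (permute_list \<sigma> r)) = 0" "F (z # permute_list (\<sigma> \<circ> \<tau>) r) = 0"
        using F by (auto simp: tensor_rep_def)
      then show ?thesis
        using Cons by simp
    qed
  qed (simp add: id_tensor_perm_def)
qed

lemma id_tensor_perm_tensor_eq:
  assumes \<sigma>: "\<sigma> permutes {..<n}" and F: "F \<in> tensor_rep (Suc n)" and G: "G \<in> tensor_rep (Suc n)"
    and eq: "tensor_eq scale F G"
  shows "tensor_eq scale (id_tensor_perm \<sigma> F) (id_tensor_perm \<sigma> G)"
proof -
  have "length w = Suc n" if "(F - G) w \<noteq> 0" for w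
    using that F G by (cases "F w = 0") (auto simp: tensor_rep_def)
  then have "id_tensor_perm \<sigma> (F - G) \<in> tensor_null scale"
    using eq by (intro tensor_null_id_tensor_perm[OF \<sigma>]) (auto simp: tensor_eq_def)
  then show ?thesis
    by (simp add: tensor_eq_def id_tensor_perm_diff)
qed

lemma tensor_eq_id_tensor_perm_comp:
  assumes \<alpha>: "\<alpha> permutes {..<n}" and \<beta>: "\<beta> permutes {..<n}" and F: "F \<in> tensor_rep (Suc n)"
    and inv\<alpha>: "tensor_eq scale (id_tensor_perm \<alpha> F) F" and inv\<beta>: "tensor_eq scale (id_tensor_perm \<beta> F) F"
  shows "tensor_eq scale (id_tensor_perm (\<alpha> \<circ> \<beta>) F) F"
proof -
  have "tensor_eq scale (id_tensor_perm \<alpha> (id_tensor_perm \<beta> F)) (id_tensor_perm \<alpha> F)"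
    by (rule id_tensor_perm_tensor_eq[OF \<alpha> id_tensor_perm_rep[OF \<beta> F] F inv\<beta>])
  then show ?thesis
    using tensor_eq_trans[OF _ inv\<alpha>] by (simp add: id_tensor_perm_comp[OF \<alpha> \<beta> F])
qed

lemma id_tensor_perm_tensor_word:
  assumes \<sigma>: "\<sigma> permutes {..<m}"
  shows "id_tensor_perm \<sigma> (tensor_word (Suc m) t K) = tensor_word (Suc m) t (id_tensor_perm \<sigma> K)"
proof
  fix zs
  show "id_tensor_perm \<sigma> (tensor_word (Suc m) t K) zs = tensor_word (Suc m) t (id_tensor_perm \<sigma> K) zs"
  proof (cases zs)
    case (Cons z r)
    show ?thesis
    proof (cases "m \<le> length r")
      case True
      then have "permute_list \<sigma> r = permute_list \<sigma> (take m r) @ drop m r"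
        using permute_list_append[of \<sigma> "take m r" "drop m r"] \<sigma> by simp
      then show ?thesis
        using Cons True by (simp add: tensor_word_def)
    qed (simp add: Cons tensor_word_def)
  qed (simp add: id_tensor_perm_def tensor_word_def)
qed

definition shift_perm :: "(nat \<Rightarrow> nat) \<Rightarrow> nat \<Rightarrow> nat" where
  "shift_perm \<sigma> i = (case i of 0 \<Rightarrow> 0 | Suc j \<Rightarrow> Suc (\<sigma> j))"

lemma permute_list_shift_perm: "permute_list (shift_perm \<sigma>) (z # r) = z # permute_list \<sigma> r"
  unfolding permute_list_def shift_perm_def by (simp add: map_upt_Suc del: upt_Suc)

lemma permutes_fix0_shift_perm:
  assumes \<rho>: "\<rho> permutes {..<Suc n}" and \<rho>0: "\<rho> 0 = 0"
  obtains \<sigma> where "\<sigma> permutes {..<n}" "\<rho> = shift_perm \<sigma>"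
proof
  define \<sigma> where "\<sigma> j = \<rho> (Suc j) - 1" for j
  have "\<rho> (Suc j) \<noteq> 0" for j
    using injD[OF permutes_inj[OF \<rho>], of "Suc j" 0] \<rho>0 by auto
  then have Suc_\<sigma>: "\<rho> (Suc j) = Suc (\<sigma> j)" for j
    by (simp add: \<sigma>_def)
  then show "\<rho> = shift_perm \<sigma>"
    using \<rho>0 by (auto simp: fun_eq_iff shift_perm_def split: nat.splits)
  show "\<sigma> permutes {..<n}"
  proof (rule inj_imp_permutes)
    show "inj_on \<sigma> {..<n}"
    proof (rule inj_onI)
      fix x y assume "\<sigma> x = \<sigma> y"
      then have "\<rho> (Suc x) = \<rho> (Suc y)"
        by (simp add: Suc_\<sigma>)
      then show "x = y"
        using injD[OF permutes_inj[OF \<rho>]] by blast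
    qed
    show "\<sigma> x \<in> {..<n}" if "x \<in> {..<n}" for x
      using that permutes_in_image[OF \<rho>, of "Suc x"] by (simp add: Suc_\<sigma>)
    show "\<sigma> x = x" if "x \<notin> {..<n}" for x
      using that permutes_not_in[OF \<rho>, of "Suc x"] by (simp add: Suc_\<sigma>)
  qed simp
qed

lemma permutes_stabilizer_transpose_induct:
  assumes \<sigma>: "\<sigma> permutes S" and ab: "a \<in> S" "b \<in> S" "a \<noteq> b"
    and comp: "\<And>\<alpha> \<beta>. \<alpha> permutes S \<Longrightarrow> \<beta> permutes S \<Longrightarrow> P \<alpha> \<Longrightarrow> P \<beta> \<Longrightarrow> P (\<alpha> \<circ> \<beta>)"
    and stab: "\<And>\<rho>. \<rho> permutes S \<Longrightarrow> \<rho> a = a \<Longrightarrow> P \<rho>"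
    and swap: "P (Transposition.transpose a b)"
  shows "P \<sigma>"
proof (cases "\<sigma> a = a")
  case True
  then show ?thesis by (rule stab[OF \<sigma>])
next
  case False
  let ?\<tau> = "Transposition.transpose a b"
  define \<rho> where "\<rho> = Transposition.transpose b (\<sigma> a)"
  have \<tau>: "?\<tau> permutes S" and \<rho>: "\<rho> permutes S"
    using ab permutes_in_image[OF \<sigma>] unfolding \<rho>_def by (auto intro: permutes_swap_id)
  have \<rho>\<sigma>: "?\<tau> \<circ> \<rho> \<circ> \<sigma> permutes S"
    by (intro permutes_compose \<sigma> \<rho> \<tau>)
  have "\<sigma> = \<rho> \<circ> (?\<tau> \<circ> (?\<tau> \<circ> \<rho> \<circ> \<sigma>))"
    by (simp add: \<rho>_def fun_eq_iff)
  moreover have "P (\<rho> \<circ> (?\<tau> \<circ> (?\<tau> \<circ> \<rho> \<circ> \<sigma>)))"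
    using False ab by (intro comp stab swap \<rho> \<tau> \<rho>\<sigma> permutes_compose) (auto simp: \<rho>_def transpose_def)
  ultimately show ?thesis by simp
qed

subsection \<open>Compatibility of \<open>\<Delta> \<otimes> id\<close> with the permutations\<close>

lemma id_tensor_perm_shift_tensor_word:
  assumes \<sigma>: "\<sigma> permutes {..<n}" and t: "length t = n"
  shows "id_tensor_perm (shift_perm \<sigma>) (tensor_word 2 t K) = tensor_word 2 (permute_list (inv \<sigma>) t) K"
proof
  fix zs
  show "id_tensor_perm (shift_perm \<sigma>) (tensor_word 2 t K) zs
        = tensor_word 2 (permute_list (inv \<sigma>) t) K zs"
  proof (cases zs)
    case (Cons z0 r0)
    then show ?thesis
      using permute_list_eq_iff[OF \<sigma> t]
      by (cases r0) (auto simp: permute_list_shift_perm tensor_word_def)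
  qed (simp add: id_tensor_perm_def tensor_word_def)
qed

lemma delta_word_perm_tail:
  assumes \<sigma>: "\<sigma> permutes {..<n}" and w: "length w = Suc n"
  shows "delta_word D (perm_tail (inv \<sigma>) w) = id_tensor_perm (shift_perm \<sigma>) (delta_word D w)"
  using w id_tensor_perm_shift_tensor_word[OF \<sigma>, of "tl w" "D (hd w)"]
  by (cases w) (simp_all add: delta_word_def perm_tail_def)

lemma iter_coprod_Suc: "iter_coprod D (Suc (Suc k)) x = delta_tensor_id D (iter_coprod D (Suc k) x)"
  by (simp add: iter_coprod_def)

context coprod_rep
begin

lemma iter_coprod_rep: "iter_coprod D (Suc k) x \<in> tensor_rep (Suc (Suc k))"
  using D_rep[unfolded numeral_2_eq_2]
  by (induction k) (simp_all add: iter_coprod_def delta_tensor_id_rep)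

lemma delta_tensor_id_id_tensor_perm:
  assumes \<sigma>: "\<sigma> permutes {..<n}" and F: "F \<in> tensor_rep (Suc n)"
  shows "delta_tensor_id D (id_tensor_perm \<sigma> F) = id_tensor_perm (shift_perm \<sigma>) (delta_tensor_id D F)"
proof -
  have fin: "finite (supp F)" and len: "\<And>w. w \<in> supp F \<Longrightarrow> length w = Suc n"
    using F by (auto simp: tensor_rep_iff)
  have "id_tensor_perm \<sigma> F = (\<Sum>w\<in>supp F. fscale (F w) (fbasis (perm_tail (inv \<sigma>) w)))"
    using finsupp_linear_expansion[OF finsupp_linear_id_tensor_perm fin] len
    by (auto simp: id_tensor_perm_fbasis[OF \<sigma>] intro: sum.cong)
  then have "delta_tensor_id D (id_tensor_perm \<sigma> F)
             = (\<Sum>w\<in>supp F. fscale (F w) (delta_word D (perm_tail (inv \<sigma>) w)))"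
    using fin by (simp add: delta_tensor_id_sum delta_tensor_id_fbasis)
  also have "\<dots> = (\<Sum>w\<in>supp F. fscale (F w) (id_tensor_perm (shift_perm \<sigma>) (delta_word D w)))"
    using len by (simp add: delta_word_perm_tail[OF \<sigma>])
  also have "\<dots> = id_tensor_perm (shift_perm \<sigma>) (delta_tensor_id D F)"
    using fin by (simp add: delta_tensor_id_expansion finsupp_linear_sum[OF finsupp_linear_id_tensor_perm]
        finite_supp_delta_word)
  finally show ?thesis .
qed

lemma delta_tensor_id_tensor_word:
  assumes K: "K \<in> tensor_rep (Suc m)"
  shows "delta_tensor_id D (tensor_word (Suc m) t K) = tensor_word (Suc (Suc m)) t (delta_tensor_id D K)"
proof -
  have fin: "finite (supp K)" and len: "\<And>u. u \<in> supp K \<Longrightarrow> length u = Suc m"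
    using K by (auto simp: tensor_rep_iff)
  have "delta_word D (u @ t) = tensor_word (Suc (Suc m)) t (delta_word D u)" if "length u = Suc m" for u
    using that tensor_word_tensor_word[of "tl u" m 2 t "D (hd u)"]
    by (cases u) (simp_all add: delta_word_def)
  then have "delta_tensor_id D (tensor_word (Suc m) t K)
             = (\<Sum>u\<in>supp K. fscale (K u) (tensor_word (Suc (Suc m)) t (delta_word D u)))"
    using fin len by (simp add: tensor_word_expansion[OF K] delta_tensor_id_sum delta_tensor_id_fbasis)
  also have "\<dots> = tensor_word (Suc (Suc m)) t (delta_tensor_id D K)"
    using fin by (simp add: delta_tensor_id_expansion finsupp_linear_sum[OF finsupp_linear_tensor_word]
        finite_supp_delta_word)
  finally show ?thesis .
qed

lemma delta_tensor_id_twice: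
  assumes G: "G \<in> tensor_rep (Suc m)"
  shows "delta_tensor_id D (delta_tensor_id D G)
         = (\<Sum>w\<in>supp G. fscale (G w) (tensor_word 3 (tl w) (iter_coprod D 2 (hd w))))"
proof -
  have fin: "finite (supp G)" and len: "\<And>w. w \<in> supp G \<Longrightarrow> w \<noteq> []"
    using G by (auto simp: tensor_rep_iff)
  have "delta_tensor_id D (delta_word D w) = tensor_word 3 (tl w) (iter_coprod D 2 (hd w))"
    if "w \<noteq> []" for w
    using that delta_tensor_id_tensor_word[OF D_rep[unfolded numeral_2_eq_2], of "tl w"]
    by (simp add: delta_word_def iter_coprod_def numeral_2_eq_2 numeral_3_eq_3)
  then show ?thesis
    using fin len by (simp add: delta_tensor_id_expansion[OF fin subset_refl] delta_tensor_id_sum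
        finite_supp_delta_word)
qed

end

context linear_coprod
begin

lemma id_tensor_perm_shift_perm_tensor_eq:
  assumes \<tau>: "\<tau> permutes {..<n}" and G: "G \<in> tensor_rep (Suc n)"
    and inv: "tensor_eq scale (id_tensor_perm \<tau> G) G"
  shows "tensor_eq scale (id_tensor_perm (shift_perm \<tau>) (delta_tensor_id D G)) (delta_tensor_id D G)"
proof -
  have "finite (supp (id_tensor_perm \<tau> G))" "finite (supp G)"
    using id_tensor_perm_rep[OF \<tau> G] G by (simp_all add: tensor_rep_iff)
  with inv show ?thesis
    by (simp add: delta_tensor_id_id_tensor_perm[OF \<tau> G, symmetric] delta_tensor_id_tensor_eq)
qed

context
  assumes sym: "\<And>x. tensor_eq scale
      (id_tensor_perm (Transposition.transpose 0 1) (iter_coprod D 2 x)) (iter_coprod D 2 x)"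
begin

lemma delta_tensor_id_twice_transpose:
  assumes G: "G \<in> tensor_rep (Suc m)"
  shows "tensor_eq scale
           (id_tensor_perm (Transposition.transpose 0 1) (delta_tensor_id D (delta_tensor_id D G)))
           (delta_tensor_id D (delta_tensor_id D G))"
proof -
  let ?\<tau> = "Transposition.transpose 0 1 :: nat \<Rightarrow> nat"
  let ?X = "\<lambda>w. iter_coprod D 2 (hd w)"
  have fin: "finite (supp G)"
    using G by (simp add: tensor_rep_iff)
  have \<tau>_word: "id_tensor_perm ?\<tau> (tensor_word 3 t K) = tensor_word 3 t (id_tensor_perm ?\<tau> K)"
    for t and K :: "'h list \<Rightarrow> 'k"
    unfolding numeral_3_eq_3 by (rule id_tensor_perm_tensor_word) (auto intro: permutes_swap_id)
  have fin_word: "finite (supp (tensor_word 3 (tl w) (?X w)))" for w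
    using tensor_word_rep[OF iter_coprod_rep[of 1 "hd w"], of "tl w"]
    by (simp add: tensor_rep_iff numeral_2_eq_2 numeral_3_eq_3)
  have "id_tensor_perm ?\<tau> (delta_tensor_id D (delta_tensor_id D G))
          - delta_tensor_id D (delta_tensor_id D G)
        = (\<Sum>w\<in>supp G. fscale (G w) (tensor_word 3 (tl w) (id_tensor_perm ?\<tau> (?X w) - ?X w)))"
    using fin
    by (simp add: \<tau>_word delta_tensor_id_twice[OF G] fin_word
        finsupp_linear_sum[OF finsupp_linear_id_tensor_perm] sum_subtractf fmod.scale_right_diff_distrib tensor_word_diff del: One_nat_def)
  also have "\<dots> \<in> tensor_null scale"
    using sym unfolding tensor_eq_def
    by (intro tensor_null_sum tensor_null_fscale tensor_null_tensor_word)
  finally show ?thesis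
    unfolding tensor_eq_def .
qed

lemma iter_coprod_transpose_invariant:
  "tensor_eq scale (id_tensor_perm (Transposition.transpose 0 1) (iter_coprod D (Suc (Suc k)) x))
     (iter_coprod D (Suc (Suc k)) x)"
proof (cases k)
  case 0
  then show ?thesis
    using sym by (simp add: numeral_2_eq_2)
next
  case (Suc k')
  then show ?thesis
    using delta_tensor_id_twice_transpose[OF iter_coprod_rep[of k' x]] by (simp add: iter_coprod_Suc)
qed

lemma iter_coprod_perm_invariant:
  "\<sigma> permutes {..<Suc k} \<Longrightarrow>
    tensor_eq scale (id_tensor_perm \<sigma> (iter_coprod D (Suc k) x)) (iter_coprod D (Suc k) x)"
proof (induction k arbitrary: \<sigma>)
  case 0
  then have "\<sigma> = id"
    by (simp add: lessThan_Suc)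
  then show ?case
    using tensor_eq_refl by (metis id_tensor_perm_id)
next
  case (Suc k)
  let ?F = "iter_coprod D (Suc (Suc k)) x"
  show ?case
  proof (rule permutes_stabilizer_transpose_induct[OF Suc.prems, of 0 1])
    show "tensor_eq scale (id_tensor_perm (\<alpha> \<circ> \<beta>) ?F) ?F"
      if "\<alpha> permutes {..<Suc (Suc k)}" "\<beta> permutes {..<Suc (Suc k)}"
        "tensor_eq scale (id_tensor_perm \<alpha> ?F) ?F" "tensor_eq scale (id_tensor_perm \<beta> ?F) ?F" for \<alpha> \<beta>
      using tensor_eq_id_tensor_perm_comp[OF _ _ iter_coprod_rep] that by blast
    show "tensor_eq scale (id_tensor_perm \<rho> ?F) ?F"
      if \<rho>: "\<rho> permutes {..<Suc (Suc k)}" and \<rho>0: "\<rho> 0 = 0" for \<rho>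
    proof -
      obtain \<tau> where \<tau>: "\<tau> permutes {..<Suc k}" and \<rho>_eq: "\<rho> = shift_perm \<tau>"
        using permutes_fix0_shift_perm[OF \<rho> \<rho>0] .
      show ?thesis
        unfolding \<rho>_eq iter_coprod_Suc
        by (rule id_tensor_perm_shift_perm_tensor_eq[OF \<tau> iter_coprod_rep Suc.IH[OF \<tau>]])
    qed
  qed (use iter_coprod_transpose_invariant in auto)
qed

end

end

theorem lemma3p1:
  fixes scale :: "'k::field_char_0 \<Rightarrow> 'h::ab_group_add \<Rightarrow> 'h"
    and D :: "'h \<Rightarrow> ('h list \<Rightarrow> 'k)"
  assumes vs: "vector_space scale"
    and D_rep: "\<And>x. D x \<in> tensor_rep 2"
    and D_add: "\<And>x y. tensor_eq scale (D (x + y)) (D x + D y)"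
    and D_scale: "\<And>c x. tensor_eq scale (D (scale c x)) (fscale c (D x))"
    and coassoc_sym: "\<And>x. tensor_eq scale
          (id_tensor_perm (Transposition.transpose 0 1) (iter_coprod D 2 x)) (iter_coprod D 2 x)"
  shows "\<forall>n \<ge> 1. \<forall>\<sigma>. \<sigma> permutes {..<n} \<longrightarrow>
          (\<forall>x. tensor_eq scale (id_tensor_perm \<sigma> (iter_coprod D n x)) (iter_coprod D n x))"
proof (intro allI impI)
  fix n :: nat and \<sigma> x
  assume "n \<ge> 1" and \<sigma>: "\<sigma> permutes {..<n}"
  then obtain k where n: "n = Suc k"
    by (cases n) auto
  interpret linear_coprod D scale
    by unfold_locales (fact D_rep D_add D_scale)+
  show "tensor_eq scale (id_tensor_perm \<sigma> (iter_coprod D n x)) (iter_coprod D n x)"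
    using iter_coprod_perm_invariant[OF coassoc_sym] \<sigma> unfolding n by blast
qed

end
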